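(* For all integers $0\le k\le n$ and all $x$, the Euler polynomials satisfy \[ \sum_{j=0}^{n-k}\binom{n-k}{j}(-1)^{j}E_{j+k}(x)=(-1)^{n+k+1}\sum_{j=0}^{k}\binom{k}{j}E_{n-j}(x)+2x^{k}(1-x)^{n-k}. \]
   Context: The Euler polynomials are defined by $\sum_{n\ge0}E_n(x)\frac{t^n}{n!}=\frac{2e^{xt}}{e^t+1}$. *)

theory Defs
  imports "HOL-Analysis.Analysis" "HOL-Computational_Algebra.Formal_Power_Series"
begin

definition euler_poly :: "nat \<Rightarrow> real \<Rightarrow> real" where
  "euler_poly n x = fact n * fps_nth (fps_const 2 * fps_exp x / (fps_exp 1 + 1)) n"

end

theory Submission
  imports Defs
begin

text \<open>
  Write E_n for E_n(x).  Multiplying the generating function by e^t + 1 and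
  comparing coefficients gives the basic relation
    \<Sum>_{j\<le>k} C(k,j) E_j + E_k = 2 x^k           for every k.
  The theorem is an identity between two families of binomial sums,
    A_k(m) = \<Sum>_{j\<le>m} C(m,j) (-1)^j E_{j+k}      and      B_k(m) = \<Sum>_{j\<le>k} C(k,j) E_{m+k-j},
  namely A_k(m) = (-1)^(m+1) B_k(m) + 2 x^k (1-x)^m, read with m = n - k.
  By Pascal's rule both families satisfy a first-order recurrence in m,
    A_k(m+1) = A_k(m) - A_{k+1}(m)   and   B_{k+1}(m) = B_k(m+1) + B_k(m),
  valid for an arbitrary sequence in any commutative ring.  An induction on m, uniform in k,
  then proves the identity for every sequence satisfying the basic relation; the base case
  m = 0 is the basic relation itself.
\<close>

text \<open>The alternating binomial sum A_k(m); up to the sign (-1)^m it is the m-th forward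
  difference of the sequence, taken at k.\<close>
definition alt_binom_sum :: "(nat \<Rightarrow> 'a::comm_ring_1) \<Rightarrow> nat \<Rightarrow> nat \<Rightarrow> 'a" where
  "alt_binom_sum e k m = (\<Sum>j\<le>m. of_nat (m choose j) * (-1)^j * e (j + k))"

definition rev_binom_sum :: "(nat \<Rightarrow> 'a::comm_ring_1) \<Rightarrow> nat \<Rightarrow> nat \<Rightarrow> 'a" where
  "rev_binom_sum e k m = (\<Sum>j\<le>k. of_nat (k choose j) * e (m + k - j))"

lemma alt_binom_sum_Suc:
  "alt_binom_sum e k (Suc m) = alt_binom_sum e k m - alt_binom_sum e (Suc k) m"
proof -
  have pascal: "\<And>i. of_nat (Suc m choose Suc i) * (-1)^Suc i * e (Suc i + k)
      = of_nat (m choose Suc i) * (-1)^Suc i * e (Suc i + k)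
        + of_nat (m choose i) * (-1)^Suc i * e (Suc i + k)"
    by (simp add: algebra_simps)
  have "alt_binom_sum e k (Suc m)
      = (e k + (\<Sum>i\<le>m. of_nat (m choose Suc i) * (-1)^Suc i * e (Suc i + k)))
        + (\<Sum>i\<le>m. of_nat (m choose i) * (-1)^Suc i * e (Suc i + k))"
    unfolding alt_binom_sum_def sum.atMost_Suc_shift pascal sum.distrib by simp
  also have "e k + (\<Sum>i\<le>m. of_nat (m choose Suc i) * (-1)^Suc i * e (Suc i + k))
      = (\<Sum>j\<le>Suc m. of_nat (m choose j) * (-1)^j * e (j + k))"
    unfolding sum.atMost_Suc_shift by simp
  also have "\<dots> = alt_binom_sum e k m"
    unfolding alt_binom_sum_def by (simp add: binomial_eq_0)
  also have "(\<Sum>i\<le>m. of_nat (m choose i) * (-1)^Suc i * e (Suc i + k))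
      = - alt_binom_sum e (Suc k) m"
    unfolding alt_binom_sum_def by (simp add: sum_negf[symmetric])
  finally show ?thesis by simp
qed

lemma rev_binom_sum_Suc:
  "rev_binom_sum e (Suc k) m = rev_binom_sum e k (Suc m) + rev_binom_sum e k m"
proof -
  have pascal: "\<And>i. of_nat (Suc k choose Suc i) * e (m + Suc k - Suc i)
      = of_nat (k choose Suc i) * e (m + k - i) + of_nat (k choose i) * e (m + k - i)"
    by (simp add: algebra_simps)
  have "rev_binom_sum e (Suc k) m
      = (e (m + Suc k) + (\<Sum>i\<le>k. of_nat (k choose Suc i) * e (m + k - i)))
        + (\<Sum>i\<le>k. of_nat (k choose i) * e (m + k - i))"
    unfolding rev_binom_sum_def sum.atMost_Suc_shift pascal sum.distrib by simp
  also have "e (m + Suc k) + (\<Sum>i\<le>k. of_nat (k choose Suc i) * e (m + k - i))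
      = (\<Sum>j\<le>Suc k. of_nat (k choose j) * e (Suc m + k - j))"
    unfolding sum.atMost_Suc_shift by simp
  also have "\<dots> = rev_binom_sum e k (Suc m)"
    unfolding rev_binom_sum_def by (simp add: binomial_eq_0)
  finally show ?thesis unfolding rev_binom_sum_def by simp
qed

text \<open>At m = 0 the convolution B_k(0) is the ordinary binomial sum, by the symmetry
  C(k,j) = C(k,k-j).\<close>
lemma rev_binom_sum_0:
  "rev_binom_sum e k 0 = (\<Sum>j\<le>k. of_nat (k choose j) * e j)"
  unfolding rev_binom_sum_def
  by (rule sum.reindex_bij_witness[where i="\<lambda>j. k - j" and j="\<lambda>j. k - j"])
     (auto simp: binomial_symmetric[symmetric])

lemma alt_binom_sum_eq:
  fixes e :: "nat \<Rightarrow> 'a::comm_ring_1"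
  assumes base: "\<And>k. (\<Sum>j\<le>k. of_nat (k choose j) * e j) + e k = c * y^k"
  shows "alt_binom_sum e k m = (-1)^(m+1) * rev_binom_sum e k m + c * y^k * (1 - y)^m"
proof (induction m arbitrary: k)
  case 0
  have "e k = c * y^k - (\<Sum>j\<le>k. of_nat (k choose j) * e j)"
    using base[of k] by (simp add: eq_diff_eq add.commute)
  then show ?case by (simp add: alt_binom_sum_def rev_binom_sum_0)
next
  case (Suc m)
  show ?case
    unfolding alt_binom_sum_Suc Suc.IH rev_binom_sum_Suc[of e k m] by (simp add: algebra_simps)
qed

lemma euler_egf_times_denominator:
  fixes x :: real
  shows "fps_const 2 * fps_exp x / (fps_exp 1 + 1) * (fps_exp 1 + 1) = fps_const 2 * fps_exp x"
proof -
  have "fps_nth (fps_exp (1::real) + 1) 0 \<noteq> 0" by simp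
  then show ?thesis by (simp add: fps_divide_unit mult.assoc inverse_mult_eq_1)
qed

text \<open>Comparing the coefficients of t^k / k! on both sides of the previous identity.\<close>
lemma euler_poly_binomial_relation:
  "(\<Sum>j\<le>k. real (k choose j) * euler_poly j x) + euler_poly k x = 2 * x^k"
proof -
  define G where "G = fps_const 2 * fps_exp x / (fps_exp 1 + 1)"
  have E: "euler_poly j x = fact j * fps_nth G j" for j
    by (simp add: euler_poly_def G_def)
  have coeffs: "fps_nth (G * fps_exp 1) k + fps_nth G k = 2 * x^k / fact k"
    using arg_cong[OF euler_egf_times_denominator[of x], of "\<lambda>F. fps_nth F k"]
    by (simp add: G_def distrib_left)
  have "fps_nth (G * fps_exp 1) k = (\<Sum>j\<le>k. fps_nth G j / fact (k - j))"
    by (simp add: fps_mult_nth atLeast0AtMost)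
  moreover have "real (k choose j) * euler_poly j x = fact k * (fps_nth G j / fact (k - j))"
    if "j \<le> k" for j
    using that by (simp add: E binomial_fact)
  ultimately have "(\<Sum>j\<le>k. real (k choose j) * euler_poly j x) + euler_poly k x
      = fact k * (fps_nth (G * fps_exp 1) k + fps_nth G k)"
    by (simp add: sum_distrib_left E distrib_left)
  also have "\<dots> = 2 * x^k"
    using coeffs by simp
  finally show ?thesis .
qed

theorem mainTheorem5:
  fixes k n :: nat and x :: real
  assumes "k \<le> n"
  shows "(\<Sum>j=0..n-k. real (n-k choose j) * (-1)^j * euler_poly (j+k) x)
       = (-1)^(n+k+1) * (\<Sum>j=0..k. real (k choose j) * euler_poly (n-j) x)
         + 2 * x^k * (1-x)^(n-k)"
proof -
  have n: "n - k + k = n" using assms by simp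
  have sign: "(-1::real)^(n+k+1) = (-1)^(n-k+1)"
  proof -
    have "n + k + 1 = (n - k + 1) + 2 * k" using assms by simp
    then have "(-1::real)^(n+k+1) = (-1)^(n - k + 1) * ((-1)^2)^k"
      by (metis power_add power_mult)
    then show ?thesis by simp
  qed
  have "alt_binom_sum (\<lambda>j. euler_poly j x) k (n - k)
      = (-1)^(n-k+1) * rev_binom_sum (\<lambda>j. euler_poly j x) k (n - k) + 2 * x^k * (1 - x)^(n-k)"
    by (rule alt_binom_sum_eq) (rule euler_poly_binomial_relation)
  then show ?thesis
    unfolding alt_binom_sum_def rev_binom_sum_def atLeast0AtMost n sign by simp
qed

end
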